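(* If $m$ is even and $\mathcal{H}\in\operatorname{H}^m(\mathbb{C}^n)$ is generic, then $\operatorname{rank}(\mathcal{H})=\operatorname{rank}_S(\mathcal{H})=\underline{\operatorname{rank}}(\mathcal{H})=\underline{\operatorname{rank}}_S(\mathcal{H})=\operatorname{rank}_V(\mathcal{H})=1+\frac{(n-1)m}{2}.$
   Context: A tensor $\mathcal{H}\in\operatorname{T}^m(\mathbb{C}^n)$ is Hankel if there is a vector $h=(h_0,\dots,h_{(n-1)m})$ with $\mathcal{H}_{i_1\dots i_m}=h_{i_1+\cdots+i_m-m}$; $\operatorname{H}^m(\mathbb{C}^n)\cong\mathbb{C}^{(n-1)m+1}$ is the space of such tensors, and "generic" means outside a proper Zariski-closed subset. Ranks: cp rank $\operatorname{rank}(\mathcal{A})$ = least $r$ with $\mathcal{A}=\sum_{i=1}^r u_{i,1}\otimes\cdots\otimes u_{i,m}$; border rank $\underline{\operatorname{rank}}(\mathcal{A})$ = least $r$ such that $\mathcal{A}$ is a limit of such sums of $r$ terms; symmetric rank $\operatorname{rank}_S$ and symmetric border rank $\underline{\operatorname{rank}}_S$ are defined the same way with terms $u_i^{\otimes m}$; Vandermonde rank $\operatorname{rank}_V(\mathcal{H})$ = least $r$ with $\mathcal{H}=\sum_{i=1}^r(a_i^{n-1},a_i^{n-2}b_i,\dots,b_i^{n-1})^{\otimes m}$, $a_i,b_i\in\mathbb{C}$. *)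

theory Defs
  imports Complex_Main
begin

text \<open>Tensors of order m over C^n are modelled as functions on index lists;
  only the entries at valid indices (lists of length m with entries < n,
  0-based) are relevant.\<close>

type_synonym tensor = "nat list \<Rightarrow> complex"

definition tindices :: "nat \<Rightarrow> nat \<Rightarrow> nat list set" where
  "tindices n m = {idx. length idx = m \<and> (\<forall>i\<in>set idx. i < n)}"

definition hankel_tensor :: "nat \<Rightarrow> nat \<Rightarrow> (nat \<Rightarrow> complex) \<Rightarrow> tensor" where
  "hankel_tensor n m h = (\<lambda>idx. h (sum_list idx))"

definition has_cp_decomp :: "nat \<Rightarrow> nat \<Rightarrow> nat \<Rightarrow> tensor \<Rightarrow> bool" where
  "has_cp_decomp n m r A \<longleftrightarrow> (\<exists>u :: nat \<Rightarrow> nat \<Rightarrow> nat \<Rightarrow> complex.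
     \<forall>idx\<in>tindices n m. A idx = (\<Sum>i<r. \<Prod>k<m. u i k (idx ! k)))"

definition has_sym_decomp :: "nat \<Rightarrow> nat \<Rightarrow> nat \<Rightarrow> tensor \<Rightarrow> bool" where
  "has_sym_decomp n m r A \<longleftrightarrow> (\<exists>v :: nat \<Rightarrow> nat \<Rightarrow> complex.
     \<forall>idx\<in>tindices n m. A idx = (\<Sum>i<r. \<Prod>k<m. v i (idx ! k)))"

text \<open>Vandermonde vector (a^(n-1), a^(n-2) b, ..., b^(n-1)): coordinate j is a^(n-1-j) b^j.\<close>
definition has_vand_decomp :: "nat \<Rightarrow> nat \<Rightarrow> nat \<Rightarrow> tensor \<Rightarrow> bool" where
  "has_vand_decomp n m r A \<longleftrightarrow> (\<exists>a b :: nat \<Rightarrow> complex.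
     \<forall>idx\<in>tindices n m. A idx =
        (\<Sum>i<r. \<Prod>k<m. a i ^ (n - 1 - idx ! k) * b i ^ (idx ! k)))"

text \<open>Limit of a sequence of tensors (entrywise = Euclidean topology, finitely many entries).\<close>
definition is_limit_of :: "nat \<Rightarrow> nat \<Rightarrow> (nat \<Rightarrow> tensor) \<Rightarrow> tensor \<Rightarrow> bool" where
  "is_limit_of n m S A \<longleftrightarrow> (\<forall>idx\<in>tindices n m. (\<lambda>p. S p idx) \<longlonglongrightarrow> A idx)"

definition cp_rank :: "nat \<Rightarrow> nat \<Rightarrow> tensor \<Rightarrow> nat" where
  "cp_rank n m A = (LEAST r. has_cp_decomp n m r A)"

definition sym_rank :: "nat \<Rightarrow> nat \<Rightarrow> tensor \<Rightarrow> nat" where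
  "sym_rank n m A = (LEAST r. has_sym_decomp n m r A)"

definition vand_rank :: "nat \<Rightarrow> nat \<Rightarrow> tensor \<Rightarrow> nat" where
  "vand_rank n m A = (LEAST r. has_vand_decomp n m r A)"

definition border_rank :: "nat \<Rightarrow> nat \<Rightarrow> tensor \<Rightarrow> nat" where
  "border_rank n m A = (LEAST r. \<exists>S. (\<forall>p. has_cp_decomp n m r (S p)) \<and> is_limit_of n m S A)"

definition sym_border_rank :: "nat \<Rightarrow> nat \<Rightarrow> tensor \<Rightarrow> nat" where
  "sym_border_rank n m A = (LEAST r. \<exists>S. (\<forall>p. has_sym_decomp n m r (S p)) \<and> is_limit_of n m S A)"

definition poly_fun :: "nat \<Rightarrow> ((nat \<Rightarrow> complex) \<Rightarrow> complex) \<Rightarrow> bool" where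
  "poly_fun N f \<longleftrightarrow> (\<exists>(E :: (nat \<Rightarrow> nat) set) c. finite E \<and>
     (\<forall>x. f x = (\<Sum>e\<in>E. c e * (\<Prod>j<N. x j ^ e j))))"

text \<open>A property P of vectors in C^N holds generically iff it holds outside a proper
  Zariski-closed subset, i.e. outside the zero set of some nonzero polynomial.\<close>
definition generic :: "nat \<Rightarrow> ((nat \<Rightarrow> complex) \<Rightarrow> bool) \<Rightarrow> bool" where
  "generic N P \<longleftrightarrow> (\<exists>f. poly_fun N f \<and> (\<exists>x. f x \<noteq> 0) \<and> (\<forall>x. f x \<noteq> 0 \<longrightarrow> P x))"

end

theory Submission
  imports Defs "Subresultants.Subresultant_Gcd" "HOL-Computational_Algebra.Field_as_Ring"
    "HOL-Computational_Algebra.Fundamental_Theorem_Algebra"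
begin

text \<open>Let \<open>k = (n - 1) m / 2\<close>. Flattening a Hankel tensor along half of its modes exhibits the
  \<open>(k + 1) \<times> (k + 1)\<close> Hankel matrix \<open>C = (h\<^sub>a\<^sub>+\<^sub>b)\<close> as a submatrix. A decomposition
  with at most \<open>k\<close> terms, or a limit of such, forces \<open>det C = 0\<close>, so all five ranks are at
  least \<open>k + 1\<close> when \<open>det C \<noteq> 0\<close>. Then \<open>h\<^sub>0, \<dots>, h\<^sub>2\<^sub>k\<close> satisfy a linear recurrence
  of order \<open>k + 1\<close>; if its characteristic (Prony) polynomial has distinct roots \<open>t\<^sub>i\<close>, then
  \<open>h\<^sub>j = \<Sum> c\<^sub>i t\<^sub>i\<^sup>j\<close>, and choosing \<open>l\<^sub>i\<close> with \<open>l\<^sub>i\<^sup>2\<^sup>k = c\<^sub>i\<close> turns this into a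
  Vandermonde decomposition with \<open>k + 1\<close> terms. Both conditions together are the nonvanishing
  of a single polynomial in \<open>h\<close>: \<open>det C\<close> times the resultant of the Prony polynomial and its
  derivative, which is nonzero at an explicit point.\<close>

section \<open>Polynomial functions\<close>

definition monomial_fun :: "nat \<Rightarrow> (nat \<Rightarrow> nat) \<Rightarrow> (nat \<Rightarrow> complex) \<Rightarrow> complex" where
  "monomial_fun N e x = (\<Prod>j<N. x j ^ e j)"

lemma poly_fun_iff_monomial_sum:
  "poly_fun N f \<longleftrightarrow> (\<exists>E c. finite E \<and> (\<forall>x. f x = (\<Sum>e\<in>E. c e * monomial_fun N e x)))"
  unfolding poly_fun_def monomial_fun_def ..

lemma poly_fun_monomial: "poly_fun N (\<lambda>x. c * monomial_fun N e x)"
  unfolding poly_fun_iff_monomial_sum by (intro exI[of _ "{e}"] exI[of _ "\<lambda>_. c"]) simp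

lemma poly_fun_const: "poly_fun N (\<lambda>x. c)"
  using poly_fun_monomial[of N c "\<lambda>_. 0"] by (simp add: monomial_fun_def)

lemma poly_fun_coordinate:
  assumes "j < N"
  shows "poly_fun N (\<lambda>x. x j)"
proof -
  have "monomial_fun N (\<lambda>i. if i = j then 1 else 0) x = x j" for x
    unfolding monomial_fun_def using assms
    by (subst prod.remove[of _ j]) (auto intro!: prod.neutral)
  with poly_fun_monomial[of N 1 "\<lambda>i. if i = j then 1 else 0"] show ?thesis
    by simp
qed

lemma poly_fun_add:
  assumes "poly_fun N f" "poly_fun N g"
  shows "poly_fun N (\<lambda>x. f x + g x)"
proof -
  obtain E c where E: "finite E" "\<And>x. f x = (\<Sum>e\<in>E. c e * monomial_fun N e x)"
    using assms(1) unfolding poly_fun_iff_monomial_sum by blast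
  obtain F d where F: "finite F" "\<And>x. g x = (\<Sum>e\<in>F. d e * monomial_fun N e x)"
    using assms(2) unfolding poly_fun_iff_monomial_sum by blast
  define c' where "c' e = (if e \<in> E then c e else 0) + (if e \<in> F then d e else 0)" for e
  have "f x + g x = (\<Sum>e\<in>E \<union> F. c' e * monomial_fun N e x)" for x
  proof -
    have "f x = (\<Sum>e\<in>E \<union> F. (if e \<in> E then c e else 0) * monomial_fun N e x)"
      unfolding E(2) using E(1) F(1) by (intro sum.mono_neutral_cong_left) auto
    moreover have "g x = (\<Sum>e\<in>E \<union> F. (if e \<in> F then d e else 0) * monomial_fun N e x)"
      unfolding F(2) using E(1) F(1) by (intro sum.mono_neutral_cong_left) auto
    ultimately show ?thesis
      unfolding c'_def distrib_right sum.distrib by simp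
  qed
  with E(1) F(1) show ?thesis
    unfolding poly_fun_iff_monomial_sum by blast
qed

lemma poly_fun_sum:
  assumes "finite A" "\<And>a. a \<in> A \<Longrightarrow> poly_fun N (f a)"
  shows "poly_fun N (\<lambda>x. \<Sum>a\<in>A. f a x)"
  using assms by (induction A rule: finite_induct) (simp_all add: poly_fun_const poly_fun_add)

lemma poly_fun_mult:
  assumes "poly_fun N f" "poly_fun N g"
  shows "poly_fun N (\<lambda>x. f x * g x)"
proof -
  obtain E c where E: "finite E" "\<And>x. f x = (\<Sum>e\<in>E. c e * monomial_fun N e x)"
    using assms(1) unfolding poly_fun_iff_monomial_sum by blast
  obtain F d where F: "finite F" "\<And>x. g x = (\<Sum>e\<in>F. d e * monomial_fun N e x)"
    using assms(2) unfolding poly_fun_iff_monomial_sum by blast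
  have mult: "monomial_fun N e x * monomial_fun N e' x = monomial_fun N (\<lambda>j. e j + e' j) x"
    for e e' x unfolding monomial_fun_def by (simp add: power_add prod.distrib)
  have "f x * g x = (\<Sum>e\<in>E. \<Sum>e'\<in>F. (c e * d e') * monomial_fun N (\<lambda>j. e j + e' j) x)" for x
    unfolding E(2) F(2) sum_product mult[symmetric] by (simp add: ac_simps)
  moreover have "poly_fun N (\<lambda>x. \<Sum>e\<in>E. \<Sum>e'\<in>F. (c e * d e') * monomial_fun N (\<lambda>j. e j + e' j) x)"
    by (intro poly_fun_sum E(1) F(1) poly_fun_monomial)
  ultimately show ?thesis
    by simp
qed

lemma poly_fun_prod:
  assumes "finite A" "\<And>a. a \<in> A \<Longrightarrow> poly_fun N (f a)"
  shows "poly_fun N (\<lambda>x. \<Prod>a\<in>A. f a x)"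
  using assms by (induction A rule: finite_induct) (simp_all add: poly_fun_const poly_fun_mult)

lemma poly_fun_uminus: "poly_fun N f \<Longrightarrow> poly_fun N (\<lambda>x. - f x)"
  using poly_fun_mult[OF poly_fun_const[of N "-1"]] by simp

lemma poly_fun_If:
  "(P \<Longrightarrow> poly_fun N f) \<Longrightarrow> (\<not> P \<Longrightarrow> poly_fun N g) \<Longrightarrow> poly_fun N (\<lambda>x. if P then f x else g x)"
  by (cases P) simp_all

lemma poly_fun_det:
  assumes "\<And>x. M x \<in> carrier_mat d d"
    and "\<And>i j. i < d \<Longrightarrow> j < d \<Longrightarrow> poly_fun N (\<lambda>x. M x $$ (i, j))"
  shows "poly_fun N (\<lambda>x. det (M x))"
  unfolding det_def'[OF assms(1)]
  by (intro poly_fun_sum poly_fun_mult poly_fun_const poly_fun_prod assms(2))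
    (auto simp: finite_permutations permutes_in_image)

section \<open>Linear algebra\<close>

lemma det_zero_row:
  assumes "A \<in> carrier_mat K K" "i < K" "\<And>j. j < K \<Longrightarrow> A $$ (i, j) = 0"
  shows "det A = 0"
proof -
  have "(\<Prod>l = 0..<K. A $$ (l, \<pi> l)) = 0" if "\<pi> permutes {0..<K}" for \<pi>
    using assms(2,3) that by (intro prod_zero) (auto simp: permutes_in_image intro!: bexI[of _ i])
  then show ?thesis
    unfolding det_def'[OF assms(1)] by simp
qed

lemma tendsto_det:
  fixes M :: "nat \<Rightarrow> 'a::real_normed_field mat"
  assumes "\<And>p. M p \<in> carrier_mat K K" "L \<in> carrier_mat K K"
    and "\<And>i j. i < K \<Longrightarrow> j < K \<Longrightarrow> (\<lambda>p. M p $$ (i, j)) \<longlonglongrightarrow> L $$ (i, j)"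
  shows "(\<lambda>p. det (M p)) \<longlonglongrightarrow> det L"
  unfolding det_def'[OF assms(1)] det_def'[OF assms(2)]
  by (intro tendsto_sum tendsto_mult tendsto_const tendsto_prod assms(3))
    (auto simp: permutes_in_image)

lemma det_nonzero_imp_solvable:
  fixes A :: "'a::field mat"
  assumes A: "A \<in> carrier_mat K K" and "det A \<noteq> 0" and b: "b \<in> carrier_vec K"
  obtains x where "x \<in> carrier_vec K" "A *\<^sub>v x = b"
proof -
  from det_non_zero_imp_unit[OF assms(1,2), unfolded Units_def, of "()"]
  obtain B where B: "B \<in> carrier_mat K K" and "A * B = 1\<^sub>m K"
    by (auto simp: ring_mat_def)
  then have "A *\<^sub>v (B *\<^sub>v b) = b"
    using assoc_mult_mat_vec[OF A B b, symmetric] b by simp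
  with B b show ?thesis
    using that by (metis mult_mat_vec_carrier)
qed

lemma det_vandermonde_nonzero:
  fixes t :: "nat \<Rightarrow> 'a::idom"
  assumes "inj_on t {..<K}"
  shows "det (mat K K (\<lambda>(i, j). t i ^ j)) \<noteq> 0"
proof
  assume "det (mat K K (\<lambda>(i, j). t i ^ j)) = 0"
  then obtain v where v: "v \<in> carrier_vec K" "v \<noteq> 0\<^sub>v K"
    and kernel: "mat K K (\<lambda>(i, j). t i ^ j) *\<^sub>v v = 0\<^sub>v K"
    using det_0_iff_vec_prod_zero[of "mat K K (\<lambda>(i, j). t i ^ j)" K] by auto
  define P where "P = (\<Sum>j<K. monom (v $ j) j)"
  have coeff_P: "coeff P j = (if j < K then v $ j else 0)" for j
    unfolding P_def coeff_sum coeff_monom by (auto simp: sum.delta)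
  have "P \<noteq> 0"
  proof
    assume "P = 0"
    then have "v $ j = 0" if "j < K" for j
      using coeff_P[of j] that by simp
    with v show False
      by (metis eq_vecI carrier_vecD index_zero_vec)
  qed
  have "poly P (t i) = (mat K K (\<lambda>(i, j). t i ^ j) *\<^sub>v v) $ i" if "i < K" for i
    unfolding P_def poly_sum poly_monom using that v(1)
    by (auto simp: scalar_prod_def row_def atLeast0LessThan ac_simps intro!: sum.cong)
  then have "t ` {..<K} \<subseteq> {z. poly P z = 0}"
    unfolding kernel by auto
  then have "card (t ` {..<K}) \<le> card {z. poly P z = 0}"
    by (intro card_mono poly_roots_finite \<open>P \<noteq> 0\<close>)
  then have "K \<le> card {z. poly P z = 0}"
    using card_image[OF assms] by simp
  also have "\<dots> \<le> degree P"
    by (rule card_poly_roots_bound[OF \<open>P \<noteq> 0\<close>])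
  also have "\<dots> < K"
  proof -
    have "K > 0"
      using v by (cases K) auto
    moreover have "degree P \<le> K - 1"
      by (rule degree_le) (auto simp: coeff_P)
    ultimately show ?thesis
      by simp
  qed
  finally show False
    by simp
qed

lemma exponential_interpolation:
  fixes t :: "nat \<Rightarrow> 'a::field"
  assumes "inj_on t {..<K}"
  obtains c where "\<And>j. j < K \<Longrightarrow> s j = (\<Sum>i<K. c i * t i ^ j)"
proof -
  define V where "V = mat K K (\<lambda>(j, i). t i ^ j)"
  have V: "V \<in> carrier_mat K K"
    unfolding V_def by simp
  have "V = transpose_mat (mat K K (\<lambda>(i, j). t i ^ j))"
    unfolding V_def by (rule eq_matI) auto
  then have "det V \<noteq> 0"
    using det_vandermonde_nonzero[OF assms] det_transpose[of "mat K K (\<lambda>(i, j). t i ^ j)" K] by simp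
  then obtain c where c: "c \<in> carrier_vec K" "V *\<^sub>v c = vec K s"
    using det_nonzero_imp_solvable[OF V, of "vec K s"] by auto
  have "s j = (\<Sum>i<K. c $ i * t i ^ j)" if "j < K" for j
  proof -
    have "s j = (V *\<^sub>v c) $ j"
      using c(2) that by simp
    then show ?thesis
      using that c(1) unfolding V_def
      by (auto simp: scalar_prod_def row_def atLeast0LessThan ac_simps intro!: sum.cong)
  qed
  with that show ?thesis
    by blast
qed

section \<open>Linear recurrences\<close>

definition satisfies_recurrence :: "'a::comm_ring_1 poly \<Rightarrow> nat \<Rightarrow> (nat \<Rightarrow> 'a) \<Rightarrow> bool" where
  "satisfies_recurrence q N s \<longleftrightarrow>
     (\<forall>j. j + degree q \<le> N \<longrightarrow> (\<Sum>l\<le>degree q. coeff q l * s (j + l)) = 0)"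

lemma satisfies_recurrence_unique:
  fixes q :: "'a::field poly"
  assumes "q \<noteq> 0" "satisfies_recurrence q N s" "satisfies_recurrence q N s'"
    and "\<And>j. j < degree q \<Longrightarrow> s j = s' j" and "J \<le> N"
  shows "s J = s' J"
  using assms(5)
proof (induction J rule: less_induct)
  case (less J)
  show ?case
  proof (cases "J < degree q")
    case True
    then show ?thesis
      by (rule assms(4))
  next
    case False
    define j where "j = J - degree q"
    have J: "J = j + degree q" and "j + degree q \<le> N"
      using False less.prems unfolding j_def by auto
    have split: "(\<Sum>l\<le>degree q. f l) = f (degree q) + (\<Sum>l<degree q. f l)" for f :: "nat \<Rightarrow> 'a"
      by (simp add: lessThan_Suc_atMost[symmetric])
    have "(\<Sum>l<degree q. coeff q l * s (j + l)) = (\<Sum>l<degree q. coeff q l * s' (j + l))"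
      using less.IH J less.prems by (intro sum.cong) auto
    moreover have "(\<Sum>l\<le>degree q. coeff q l * s (j + l)) = (\<Sum>l\<le>degree q. coeff q l * s' (j + l))"
      using assms(2,3) \<open>j + degree q \<le> N\<close> unfolding satisfies_recurrence_def by simp
    ultimately have "lead_coeff q * s J = lead_coeff q * s' J"
      unfolding split J by (simp add: add.commute)
    with assms(1) show ?thesis
      by simp
  qed
qed

lemma satisfies_recurrence_exponential_sum:
  fixes q :: "'a::comm_ring_1 poly"
  assumes "\<And>i. i \<in> I \<Longrightarrow> poly q (t i) = 0"
  shows "satisfies_recurrence q N (\<lambda>j. \<Sum>i\<in>I. c i * t i ^ j)"
proof -
  have "(\<Sum>l\<le>degree q. coeff q l * (\<Sum>i\<in>I. c i * t i ^ (j + l))) =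
        (\<Sum>i\<in>I. c i * t i ^ j * poly q (t i))" for j
    unfolding poly_altdef sum_distrib_left power_add
    by (subst sum.swap) (simp add: ac_simps)
  with assms show ?thesis
    unfolding satisfies_recurrence_def by simp
qed

lemma satisfies_recurrence_imp_exponential_sum:
  fixes q :: "complex poly"
  assumes "rsquarefree q" "satisfies_recurrence q N s"
  obtains c t where "\<And>j. j \<le> N \<Longrightarrow> s j = (\<Sum>i<degree q. c i * t i ^ j)"
proof -
  have "q \<noteq> 0"
    using assms(1) by (simp add: rsquarefree_def)
  define R where "R = {z. poly q z = 0}"
  have "finite R"
    unfolding R_def by (rule poly_roots_finite[OF \<open>q \<noteq> 0\<close>])
  have "degree q = degree (smult (lead_coeff q) (\<Prod>z\<in>R. [:- z, 1:]))"
    using complex_poly_decompose_rsquarefree[OF assms(1)] unfolding R_def by simp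
  also have "\<dots> = card R"
    using \<open>q \<noteq> 0\<close> by (simp add: degree_prod_sum_eq)
  finally obtain t where t: "bij_betw t {..<degree q} R"
    using ex_bij_betw_nat_finite[OF \<open>finite R\<close>] by (metis atLeast0LessThan)
  then have roots: "poly q (t i) = 0" if "i \<in> {..<degree q}" for i
    using that unfolding bij_betw_def R_def by auto
  obtain c where c: "\<And>j. j < degree q \<Longrightarrow> s j = (\<Sum>i<degree q. c i * t i ^ j)"
    using exponential_interpolation[of t "degree q" s] t by (auto simp: bij_betw_def)
  have "s j = (\<Sum>i<degree q. c i * t i ^ j)" if "j \<le> N" for j
    using satisfies_recurrence_unique[OF \<open>q \<noteq> 0\<close> assms(2) satisfies_recurrence_exponential_sum[OF roots] c that] .
  with that show ?thesis
    by blast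
qed

section \<open>Resultants and complex roots\<close>

lemma resultant_eq_0_iff_common_root:
  fixes p q :: "complex poly"
  assumes "p \<noteq> 0"
  shows "resultant p q = 0 \<longleftrightarrow> (\<exists>z. poly p z = 0 \<and> poly q z = 0)"
proof
  assume "resultant p q = 0"
  then have "\<not> constant (poly (gcd p q))"
    by (simp add: resultant_0_gcd constant_degree)
  then obtain z where "poly (gcd p q) z = 0"
    using fundamental_theorem_of_algebra by blast
  then have "[:-z, 1:] dvd p" "[:-z, 1:] dvd q"
    by (meson dvd_trans gcd_dvd1 gcd_dvd2 poly_eq_0_iff_dvd)+
  then show "\<exists>z. poly p z = 0 \<and> poly q z = 0"
    by (auto simp: poly_eq_0_iff_dvd)
next
  assume "\<exists>z. poly p z = 0 \<and> poly q z = 0"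
  then obtain z where "[:-z, 1:] dvd gcd p q"
    by (auto simp: poly_eq_0_iff_dvd)
  then have "degree [:-z, 1:] \<le> degree (gcd p q)"
    by (rule dvd_imp_degree_le) (simp add: assms)
  then show "resultant p q = 0"
    by (simp add: resultant_0_gcd)
qed

lemma complex_root_exists:
  assumes "d > 0"
  obtains l :: complex where "l ^ d = c"
proof -
  have "rcis (root d (cmod c)) (Arg c / real d) ^ d = rcis (root d (cmod c) ^ d) (real d * (Arg c / real d))"
    by (rule DeMoivre2)
  also have "\<dots> = c"
    using assms by (simp add: real_root_pow_pos2 rcis_cmod_Arg)
  finally show ?thesis
    using that by blast
qed

section \<open>Flattenings of tensors\<close>

fun greedy_split :: "nat \<Rightarrow> nat \<Rightarrow> nat \<Rightarrow> nat list" where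
  "greedy_split d 0 a = []"
| "greedy_split d (Suc l) a = min a d # greedy_split d l (a - min a d)"

lemma length_greedy_split [simp]: "length (greedy_split d l a) = l"
  by (induction l arbitrary: a) auto

lemma greedy_split_le: "x \<in> set (greedy_split d l a) \<Longrightarrow> x \<le> d"
  by (induction l arbitrary: a) auto

lemma sum_list_greedy_split: "a \<le> d * l \<Longrightarrow> sum_list (greedy_split d l a) = a"
  by (induction l arbitrary: a) (auto simp: min_def)

text \<open>The \<open>K \<times> K\<close> block of the flattening along the first and last \<open>m/2\<close> modes
  whose rows and columns are indexed by multi-indices of coordinate sum \<open>0, \<dots>, K - 1\<close>.\<close>
definition square_flattening :: "nat \<Rightarrow> nat \<Rightarrow> nat \<Rightarrow> tensor \<Rightarrow> complex mat" where
  "square_flattening n m K A =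
     mat K K (\<lambda>(a, b). A (greedy_split (n - 1) (m div 2) a @ greedy_split (n - 1) (m div 2) b))"

lemma greedy_split_append_in_tindices:
  assumes "even m" "n \<ge> 1"
  shows "greedy_split (n - 1) (m div 2) a @ greedy_split (n - 1) (m div 2) b \<in> tindices n m"
  using assms greedy_split_le[of _ "n - 1" "m div 2"] unfolding tindices_def by fastforce

lemma prod_lessThan_add: "(\<Prod>k<a + b. f k) = (\<Prod>k<a. f k) * (\<Prod>k<b. f (a + k))"
  for f :: "nat \<Rightarrow> 'a::comm_monoid_mult"
  by (induction b) (auto simp: lessThan_Suc ac_simps)

lemma det_square_flattening_cp_decomp:
  assumes "has_cp_decomp n m r A" "r < K" "even m" "n \<ge> 1"
  shows "det (square_flattening n m K A) = 0"
proof -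
  obtain u where u: "\<And>idx. idx \<in> tindices n m \<Longrightarrow> A idx = (\<Sum>i<r. \<Prod>k<m. u i k (idx ! k))"
    using assms(1) unfolding has_cp_decomp_def by blast
  define m2 where "m2 = m div 2"
  have m: "m = m2 + m2"
    using assms(3) unfolding m2_def by auto
  define \<alpha> where "\<alpha> a = greedy_split (n - 1) m2 a" for a
  define U where "U = mat K K (\<lambda>(a, i). if i < r then \<Prod>k<m2. u i k (\<alpha> a ! k) else 0)"
  define W where "W = mat K K (\<lambda>(i, b). if i < r then \<Prod>k<m2. u i (m2 + k) (\<alpha> b ! k) else 0)"
  have U: "U \<in> carrier_mat K K" and W: "W \<in> carrier_mat K K"
    unfolding U_def W_def by auto
  have "square_flattening n m K A = U * W"
  proof (rule eq_matI)
    fix a b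
    assume "a < dim_row (U * W)" "b < dim_col (U * W)"
    then have a: "a < K" and b: "b < K"
      using U W by auto
    have "(U * W) $$ (a, b) = (\<Sum>i<K. U $$ (a, i) * W $$ (i, b))"
      using a b U W by (simp add: scalar_prod_def atLeast0LessThan)
    also have "\<dots> = (\<Sum>i<r. (\<Prod>k<m2. u i k (\<alpha> a ! k)) * (\<Prod>k<m2. u i (m2 + k) (\<alpha> b ! k)))"
      using a b assms(2) unfolding U_def W_def by (intro sum.mono_neutral_cong_right) auto
    also have "\<dots> = (\<Sum>i<r. \<Prod>k<m. u i k ((\<alpha> a @ \<alpha> b) ! k))"
      unfolding m prod_lessThan_add
      by (intro sum.cong refl arg_cong2[where f = "(*)"] prod.cong) (auto simp: nth_append \<alpha>_def)
    also have "\<dots> = A (\<alpha> a @ \<alpha> b)"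
      using u[OF greedy_split_append_in_tindices[OF assms(3,4)]] unfolding \<alpha>_def m2_def by simp
    finally show "square_flattening n m K A $$ (a, b) = (U * W) $$ (a, b)"
      using a b unfolding square_flattening_def \<alpha>_def m2_def by simp
  qed (use U W in \<open>auto simp: square_flattening_def\<close>)
  moreover have "det W = 0"
    by (rule det_zero_row[OF W, of "K - 1"]) (use assms(2) in \<open>auto simp: W_def\<close>)
  ultimately show ?thesis
    using det_mult[OF U W] by simp
qed

lemma det_square_flattening_border_decomp:
  assumes "\<And>p. has_cp_decomp n m r (S p)" "is_limit_of n m S A" "r < K" "even m" "n \<ge> 1"
  shows "det (square_flattening n m K A) = 0"
proof -
  have "(\<lambda>p. det (square_flattening n m K (S p))) \<longlonglongrightarrow> det (square_flattening n m K A)"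
    using assms(2) greedy_split_append_in_tindices[OF assms(4,5)]
    by (intro tendsto_det) (auto simp: square_flattening_def is_limit_of_def)
  moreover have "det (square_flattening n m K (S p)) = 0" for p
    using det_square_flattening_cp_decomp[OF assms(1) assms(3-5)] .
  ultimately show ?thesis
    by (simp add: LIMSEQ_const_iff)
qed

definition hankel_mat :: "nat \<Rightarrow> (nat \<Rightarrow> 'a) \<Rightarrow> 'a mat" where
  "hankel_mat K h = mat K K (\<lambda>(a, b). h (a + b))"

lemma dim_hankel_mat [simp]: "dim_row (hankel_mat K h) = K" "dim_col (hankel_mat K h) = K"
  unfolding hankel_mat_def by simp_all

lemma hankel_mat_carrier [simp]: "hankel_mat K h \<in> carrier_mat K K"
  unfolding hankel_mat_def by simp

lemma hankel_mat_mult_vec: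
  assumes "x \<in> carrier_vec (Suc k)" "j < Suc k"
  shows "(hankel_mat (Suc k) h *\<^sub>v x) $ j = (\<Sum>l\<le>k. h (j + l) * x $ l)"
  using assms unfolding hankel_mat_def
  by (auto simp: scalar_prod_def row_def atLeast0LessThan lessThan_Suc_atMost intro!: sum.cong)

lemma square_flattening_hankel_tensor:
  assumes "K \<le> (n - 1) * (m div 2) + 1"
  shows "square_flattening n m K (hankel_tensor n m h) = hankel_mat K h"
  unfolding square_flattening_def hankel_mat_def hankel_tensor_def
  by (rule eq_matI) (use assms in \<open>auto simp: sum_list_greedy_split\<close>)

lemma border_decomp_hankel_ge:
  assumes "even m" "n \<ge> 1" "K \<le> (n - 1) * (m div 2) + 1" "det (hankel_mat K h) \<noteq> 0"
    and "\<And>p. has_cp_decomp n m r (S p)" "is_limit_of n m S (hankel_tensor n m h)"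
  shows "K \<le> r"
  using det_square_flattening_border_decomp[OF assms(5,6) _ assms(1,2), of K] assms(4)
  unfolding square_flattening_hankel_tensor[OF assms(3)] by fastforce

section \<open>Decompositions and ranks\<close>

text \<open>With \<open>l\<^sub>i ^ ((n - 1) * m) = c\<^sub>i\<close>, the Vandermonde vector of \<open>(l\<^sub>i, l\<^sub>i t\<^sub>i)\<close>
  contributes \<open>c\<^sub>i t\<^sub>i ^ (i\<^sub>1 + \<dots> + i\<^sub>m)\<close> to the entry at \<open>(i\<^sub>1, \<dots>, i\<^sub>m)\<close>.\<close>
lemma hankel_tensor_vand_decomp:
  assumes "\<And>j. j \<le> (n - 1) * m \<Longrightarrow> h j = (\<Sum>i<R. c i * t i ^ j)" and "(n - 1) * m > 0"
  shows "has_vand_decomp n m R (hankel_tensor n m h)"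
proof -
  have "\<forall>i. \<exists>l. l ^ ((n - 1) * m) = c i"
    using complex_root_exists[OF assms(2)] by blast
  then obtain l where l: "\<And>i. l i ^ ((n - 1) * m) = c i"
    by metis
  have "hankel_tensor n m h idx =
          (\<Sum>i<R. \<Prod>q<m. l i ^ (n - 1 - idx ! q) * (l i * t i) ^ (idx ! q))"
    if idx: "idx \<in> tindices n m" for idx
  proof -
    have len: "length idx = m"
      using idx unfolding tindices_def by simp
    have lt: "idx ! q \<le> n - 1" if "q < m" for q
    proof -
      have "idx ! q \<in> set idx"
        using that len by simp
      then show ?thesis
        using idx unfolding tindices_def by fastforce
    qed
    have sum: "sum_list idx = (\<Sum>q<m. idx ! q)"
      using len by (simp add: sum_list_sum_nth atLeast0LessThan)
    have "sum_list idx \<le> (n - 1) * m"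
      unfolding sum using sum_bounded_above[of "{..<m}" "\<lambda>q. idx ! q" "n - 1"] lt
      by (simp add: mult.commute)
    moreover have "(\<Prod>q<m. l i ^ (n - 1 - idx ! q) * (l i * t i) ^ (idx ! q)) = c i * t i ^ sum_list idx"
      for i
    proof -
      have "l i ^ (n - 1 - idx ! q) * (l i * t i) ^ (idx ! q) = l i ^ (n - 1) * t i ^ (idx ! q)"
        if "q < m" for q
      proof -
        have "l i ^ (n - 1) = l i ^ (n - 1 - idx ! q) * l i ^ (idx ! q)"
          using lt[OF that] by (metis le_add_diff_inverse2 power_add)
        then show ?thesis
          by (simp add: power_mult_distrib)
      qed
      then have "(\<Prod>q<m. l i ^ (n - 1 - idx ! q) * (l i * t i) ^ (idx ! q))
                  = l i ^ ((n - 1) * m) * t i ^ (\<Sum>q<m. idx ! q)"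
        by (simp add: prod.distrib power_sum power_mult)
      then show ?thesis
        using l[of i] sum by simp
    qed
    ultimately show ?thesis
      using assms(1) unfolding hankel_tensor_def by simp
  qed
  then show ?thesis
    unfolding has_vand_decomp_def by (intro exI[of _ l] exI[of _ "\<lambda>i. l i * t i"]) simp
qed

lemma vand_decomp_imp_sym_decomp: "has_vand_decomp n m r A \<Longrightarrow> has_sym_decomp n m r A"
  unfolding has_vand_decomp_def has_sym_decomp_def by fast

lemma sym_decomp_imp_cp_decomp: "has_sym_decomp n m r A \<Longrightarrow> has_cp_decomp n m r A"
  unfolding has_sym_decomp_def has_cp_decomp_def by fast

lemma ranks_eq_if_vand_decomp_and_border_bound:
  assumes "has_vand_decomp n m R A"
    and "\<And>r S. \<forall>p. has_cp_decomp n m r (S p) \<Longrightarrow> is_limit_of n m S A \<Longrightarrow> R \<le> r"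
  shows "cp_rank n m A = R \<and> sym_rank n m A = R \<and> border_rank n m A = R \<and>
    sym_border_rank n m A = R \<and> vand_rank n m A = R"
proof -
  have sym: "has_sym_decomp n m R A"
    using vand_decomp_imp_sym_decomp[OF assms(1)] .
  have const: "is_limit_of n m (\<lambda>p. A) A"
    unfolding is_limit_of_def by simp
  have cp_bound: "R \<le> r" if "has_cp_decomp n m r A" for r
    using assms(2)[of r "\<lambda>p. A"] that const by blast
  have "cp_rank n m A = R"
    unfolding cp_rank_def using sym_decomp_imp_cp_decomp[OF sym] cp_bound by (rule Least_equality)
  moreover have "sym_rank n m A = R"
    unfolding sym_rank_def using sym cp_bound sym_decomp_imp_cp_decomp by (intro Least_equality) blast+
  moreover have "vand_rank n m A = R"
    unfolding vand_rank_def using assms(1) cp_bound sym_decomp_imp_cp_decomp vand_decomp_imp_sym_decomp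
    by (intro Least_equality) blast+
  moreover have "border_rank n m A = R"
    unfolding border_rank_def
  proof (rule Least_equality)
    show "\<exists>S. (\<forall>p. has_cp_decomp n m R (S p)) \<and> is_limit_of n m S A"
      using sym_decomp_imp_cp_decomp[OF sym] const by (intro exI[of _ "\<lambda>p. A"]) simp
  qed (auto intro: assms(2))
  moreover have "sym_border_rank n m A = R"
    unfolding sym_border_rank_def
  proof (rule Least_equality)
    show "\<exists>S. (\<forall>p. has_sym_decomp n m R (S p)) \<and> is_limit_of n m S A"
      using sym const by (intro exI[of _ "\<lambda>p. A"]) simp
  qed (auto intro: assms(2) sym_decomp_imp_cp_decomp)
  ultimately show ?thesis
    by blast
qed

section \<open>The Prony polynomial of a Hankel matrix\<close>

text \<open>Row \<open>j < k\<close> of \<open>C x = b\<close> states \<open>h\<^sub>j\<^sub>+\<^sub>k\<^sub>+\<^sub>1 + \<Sum>\<^sub>l x\<^sub>l h\<^sub>j\<^sub>+\<^sub>l = 0\<close>. Row \<open>k\<close> would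
  involve \<open>h\<^sub>2\<^sub>k\<^sub>+\<^sub>1\<close>, which is not a coordinate; its right-hand side is set to \<open>0\<close>
  so that everything stays polynomial in \<open>h\<^sub>0, \<dots>, h\<^sub>2\<^sub>k\<close>.\<close>
definition prony_rhs :: "nat \<Rightarrow> (nat \<Rightarrow> complex) \<Rightarrow> complex vec" where
  "prony_rhs k h = vec (Suc k) (\<lambda>j. if j < k then - h (j + Suc k) else 0)"

definition monic_poly :: "nat \<Rightarrow> complex vec \<Rightarrow> complex poly" where
  "monic_poly k x = monom 1 (Suc k) + (\<Sum>l\<le>k. monom (x $ l) l)"

text \<open>The monic polynomial with coefficient vector \<open>x = C\<^sup>-\<^sup>1 b\<close>, scaled by \<open>det C\<close>
  via Cramer's rule so that its coefficients are polynomial in \<open>h\<close> even when \<open>C\<close> is singular.\<close>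
definition prony_poly :: "nat \<Rightarrow> (nat \<Rightarrow> complex) \<Rightarrow> complex poly" where
  "prony_poly k h = monom (det (hankel_mat (Suc k) h)) (Suc k) +
     (\<Sum>l\<le>k. monom (det (replace_col (hankel_mat (Suc k) h) (prony_rhs k h) l)) l)"

definition prony_certificate :: "nat \<Rightarrow> (nat \<Rightarrow> complex) \<Rightarrow> complex" where
  "prony_certificate k h = det (hankel_mat (Suc k) h) *
     resultant_sub (Suc k) k (prony_poly k h) (pderiv (prony_poly k h))"

lemma coeff_monic_poly:
  "coeff (monic_poly k x) l = (if l = Suc k then 1 else if l \<le> k then x $ l else 0)"
  unfolding monic_poly_def coeff_add coeff_sum coeff_monom by (auto simp: sum.delta)

lemma degree_monic_poly [simp]: "degree (monic_poly k x) = Suc k"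
proof (rule antisym)
  show "degree (monic_poly k x) \<le> Suc k"
    by (rule degree_le) (simp add: coeff_monic_poly)
  show "Suc k \<le> degree (monic_poly k x)"
    by (rule le_degree) (simp add: coeff_monic_poly)
qed

lemma coeff_prony_poly:
  "coeff (prony_poly k h) l = (if l = Suc k then det (hankel_mat (Suc k) h)
     else if l \<le> k then det (replace_col (hankel_mat (Suc k) h) (prony_rhs k h) l) else 0)"
  unfolding prony_poly_def coeff_add coeff_sum coeff_monom by (auto simp: sum.delta)

lemma prony_poly_eq_smult:
  assumes "x \<in> carrier_vec (Suc k)" "hankel_mat (Suc k) h *\<^sub>v x = prony_rhs k h"
  shows "prony_poly k h = smult (det (hankel_mat (Suc k) h)) (monic_poly k x)"
  by (rule poly_eqI)
    (use cramer_lemma_mat[OF hankel_mat_carrier assms(1), of _ h] assms(2)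
      in \<open>auto simp: coeff_prony_poly coeff_monic_poly mult.commute\<close>)

lemma hankel_satisfies_recurrence:
  assumes "x \<in> carrier_vec (Suc k)" "hankel_mat (Suc k) h *\<^sub>v x = prony_rhs k h"
  shows "satisfies_recurrence (monic_poly k x) (2 * k) h"
  unfolding satisfies_recurrence_def degree_monic_poly
proof (intro allI impI)
  fix j
  assume "j + Suc k \<le> 2 * k"
  then have "j < k"
    by simp
  have "(\<Sum>l\<le>Suc k. coeff (monic_poly k x) l * h (j + l))
          = h (j + Suc k) + (hankel_mat (Suc k) h *\<^sub>v x) $ j"
    using hankel_mat_mult_vec[OF assms(1), of j h] \<open>j < k\<close>
    by (simp add: coeff_monic_poly ac_simps)
  also have "\<dots> = 0"
    unfolding assms(2) prony_rhs_def using \<open>j < k\<close> by simp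
  finally show "(\<Sum>l\<le>Suc k. coeff (monic_poly k x) l * h (j + l)) = 0" .
qed

lemma prony_certificate_nonzero_iff:
  assumes "x \<in> carrier_vec (Suc k)" "hankel_mat (Suc k) h *\<^sub>v x = prony_rhs k h"
    and "det (hankel_mat (Suc k) h) \<noteq> 0"
  shows "prony_certificate k h \<noteq> 0 \<longleftrightarrow> rsquarefree (monic_poly k x)"
proof -
  let ?d = "det (hankel_mat (Suc k) h)" and ?q = "monic_poly k x"
  have p: "prony_poly k h = smult ?d ?q"
    by (rule prony_poly_eq_smult[OF assms(1,2)])
  have "?q \<noteq> 0"
    using degree_monic_poly[of k x] by (metis degree_0 nat.simps(3))
  have "resultant_sub (Suc k) k (prony_poly k h) (pderiv (prony_poly k h)) =
        resultant (prony_poly k h) (pderiv (prony_poly k h))"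
    unfolding resultant_def resultant_sub_def sylvester_mat_def p
    using assms(3) by (simp add: degree_pderiv)
  also have "\<dots> = 0 \<longleftrightarrow> (\<exists>z. poly ?q z = 0 \<and> poly (pderiv ?q) z = 0)"
    unfolding p using assms(3) \<open>?q \<noteq> 0\<close>
    by (simp add: resultant_eq_0_iff_common_root pderiv_smult)
  finally show ?thesis
    unfolding prony_certificate_def rsquarefree_roots using assms(3) by simp
qed

lemma prony_certificate_imp_exponential_sum:
  assumes "prony_certificate k h \<noteq> 0"
  obtains c t where "\<And>j. j \<le> 2 * k \<Longrightarrow> h j = (\<Sum>i<Suc k. c i * t i ^ j)"
proof -
  have d: "det (hankel_mat (Suc k) h) \<noteq> 0"
    using assms unfolding prony_certificate_def by simp
  obtain x where x: "x \<in> carrier_vec (Suc k)" "hankel_mat (Suc k) h *\<^sub>v x = prony_rhs k h"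
    using det_nonzero_imp_solvable[OF hankel_mat_carrier d, of "prony_rhs k h"]
    by (auto simp: prony_rhs_def)
  have "rsquarefree (monic_poly k x)"
    using prony_certificate_nonzero_iff[OF x d] assms by simp
  then obtain c t where "\<And>j. j \<le> 2 * k \<Longrightarrow> h j = (\<Sum>i<degree (monic_poly k x). c i * t i ^ j)"
    using satisfies_recurrence_imp_exponential_sum hankel_satisfies_recurrence[OF x] by blast
  then show ?thesis
    using that[of c t] by (simp only: degree_monic_poly)
qed

lemma poly_fun_coeff_prony_poly: "poly_fun (2 * k + 1) (\<lambda>h. coeff (prony_poly k h) l)"
proof -
  have entry: "poly_fun (2 * k + 1) (\<lambda>h. hankel_mat (Suc k) h $$ (i, j))"
    if "i < Suc k" "j < Suc k" for i j
    using that unfolding hankel_mat_def by (simp add: poly_fun_coordinate)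
  have "poly_fun (2 * k + 1) (\<lambda>h. prony_rhs k h $ i)" if "i < Suc k" for i
    using that unfolding prony_rhs_def
    by (auto intro!: poly_fun_If poly_fun_uminus poly_fun_coordinate poly_fun_const)
  then have "poly_fun (2 * k + 1) (\<lambda>h. det (replace_col (hankel_mat (Suc k) h) (prony_rhs k h) l))"
    using entry
    by (intro poly_fun_det) (auto simp: replace_col_def hankel_mat_def[of "Suc k"] intro!: poly_fun_If)
  moreover have "poly_fun (2 * k + 1) (\<lambda>h. det (hankel_mat (Suc k) h))"
    using entry by (intro poly_fun_det[OF hankel_mat_carrier])
  ultimately show ?thesis
    unfolding coeff_prony_poly by (intro poly_fun_If poly_fun_const)
qed

lemma poly_fun_prony_certificate: "poly_fun (2 * k + 1) (prony_certificate k)"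
proof -
  have "poly_fun (2 * k + 1) (\<lambda>h. det (hankel_mat (Suc k) h))"
    using poly_fun_coeff_prony_poly[of k "Suc k"] by (simp add: coeff_prony_poly)
  moreover have "poly_fun (2 * k + 1)
      (\<lambda>h. det (sylvester_mat_sub (Suc k) k (prony_poly k h) (pderiv (prony_poly k h))))"
  proof (rule poly_fun_det[OF sylvester_mat_sub_carrier])
    fix i j
    assume ij: "i < Suc k + k" "j < Suc k + k"
    show "poly_fun (2 * k + 1)
        (\<lambda>h. sylvester_mat_sub (Suc k) k (prony_poly k h) (pderiv (prony_poly k h)) $$ (i, j))"
      unfolding sylvester_mat_sub_index[OF ij] coeff_pderiv
      by (intro poly_fun_If poly_fun_mult poly_fun_const poly_fun_coeff_prony_poly)
  qed
  ultimately show ?thesis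
    unfolding prony_certificate_def[abs_def] resultant_sub_def by (rule poly_fun_mult)
qed

text \<open>The witness is the Hankel vector of \<open>\<Sum>\<^sub>\<omega> \<omega> ^ j / (k + 1)\<close> over the
  \<open>(k + 1)\<close>-st roots of unity; its Prony polynomial is \<open>z ^ (k + 1) - 1\<close>.\<close>
lemma prony_certificate_witness:
  assumes "k \<ge> 1"
  shows "prony_certificate k (\<lambda>j. if j = 0 \<or> j = Suc k then 1 else 0) \<noteq> 0"
proof -
  define w :: "nat \<Rightarrow> complex" where "w j = (if j = 0 \<or> j = Suc k then 1 else 0)" for j
  let ?C = "hankel_mat (Suc k) w"
  have C: "(?C *\<^sub>v v) $ a = v $ (if a = 0 then 0 else Suc k - a)"
    if "v \<in> carrier_vec (Suc k)" "a < Suc k" for v a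
  proof -
    have "(?C *\<^sub>v v) $ a = (\<Sum>l\<le>k. if l = (if a = 0 then 0 else Suc k - a) then v $ l else 0)"
      unfolding hankel_mat_mult_vec[OF that] using that(2) by (intro sum.cong) (auto simp: w_def)
    also have "\<dots> = v $ (if a = 0 then 0 else Suc k - a)"
      using that(2) by auto
    finally show ?thesis .
  qed
  have "det ?C \<noteq> 0"
  proof
    assume "det ?C = 0"
    then obtain v where v: "v \<in> carrier_vec (Suc k)" "v \<noteq> 0\<^sub>v (Suc k)" "?C *\<^sub>v v = 0\<^sub>v (Suc k)"
      using det_0_iff_vec_prod_zero[OF hankel_mat_carrier] by blast
    have "v $ b = 0" if "b < Suc k" for b
      using C[OF v(1), of "if b = 0 then 0 else Suc k - b"] v(3) that
      by (cases "b = 0") auto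
    with v(1,2) show False
      by (metis eq_vecI carrier_vecD index_zero_vec)
  qed
  define x :: "complex vec" where "x = vec (Suc k) (\<lambda>l. if l = 0 then -1 else 0)"
  have x: "x \<in> carrier_vec (Suc k)"
    unfolding x_def by simp
  have "?C *\<^sub>v x = prony_rhs k w"
    by (rule eq_vecI) (use assms C[OF x] in \<open>auto simp: x_def prony_rhs_def w_def\<close>)
  moreover have "rsquarefree (monic_poly k x)"
  proof -
    have q: "monic_poly k x = monom 1 (Suc k) - 1"
      by (rule poly_eqI) (auto simp: coeff_monic_poly x_def)
    have "poly (pderiv (monic_poly k x)) z = 0 \<Longrightarrow> poly (monic_poly k x) z \<noteq> 0" for z
      unfolding q by (simp add: pderiv_diff pderiv_monom poly_monom flip: of_nat_Suc)
    then show ?thesis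
      unfolding rsquarefree_roots by blast
  qed
  ultimately show ?thesis
    using prony_certificate_nonzero_iff[OF x _ \<open>det ?C \<noteq> 0\<close>] unfolding w_def by simp
qed

theorem corollary4p3:
  fixes n m :: nat
  assumes "even m" and "m \<ge> 2" and "n \<ge> 2"
  shows "generic ((n - 1) * m + 1) (\<lambda>h.
     let H = hankel_tensor n m h; R = 1 + (n - 1) * m div 2 in
       cp_rank n m H = R \<and> sym_rank n m H = R \<and> border_rank n m H = R \<and>
       sym_border_rank n m H = R \<and> vand_rank n m H = R)"
proof -
  define k where "k = (n - 1) * m div 2"
  have k: "(n - 1) * m = 2 * k" "k \<ge> 1" "Suc k \<le> (n - 1) * (m div 2) + 1"
    using assms mult_le_mono[of 1 "n - 1" 2 m] unfolding k_def by (auto elim!: evenE)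
  have ranks: "cp_rank n m H = Suc k \<and> sym_rank n m H = Suc k \<and> border_rank n m H = Suc k \<and>
      sym_border_rank n m H = Suc k \<and> vand_rank n m H = Suc k"
    if cert: "prony_certificate k h \<noteq> 0" and H: "H = hankel_tensor n m h" for h H
  proof (rule ranks_eq_if_vand_decomp_and_border_bound)
    obtain c t where "\<And>j. j \<le> 2 * k \<Longrightarrow> h j = (\<Sum>i<Suc k. c i * t i ^ j)"
      using prony_certificate_imp_exponential_sum[OF cert] by blast
    then show "has_vand_decomp n m (Suc k) H"
      unfolding H using k by (intro hankel_tensor_vand_decomp) auto
    have "det (hankel_mat (Suc k) h) \<noteq> 0"
      using cert unfolding prony_certificate_def by simp
    then show "Suc k \<le> r" if "\<forall>p. has_cp_decomp n m r (S p)" "is_limit_of n m S H" for r S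
      using border_decomp_hankel_ge[OF assms(1) _ k(3)] that assms(3) unfolding H by auto
  qed
  show ?thesis
    unfolding generic_def Let_def k(1) k_def[symmetric]
    using poly_fun_prony_certificate prony_certificate_witness[OF k(2)] ranks by auto
qed

end
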